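(* Let $G$ be a group, $E$ a real Banach space, and $f\in KJ(G;E)$. For $m\ge 2$ let $\varphi_m(x)=\lim_{k\to\infty}\frac{1}{m^k}f(x^{m^k})$. Then $\varphi_2=\varphi_m$ for every $m\ge 2$.
   Context: $KJ(G;E)$ is the space of functions $f\colon G\to E$ for which there exists $c>0$ with $\|f(xy)+f(xy^{-1})-2f(x)\|\le c$ for all $x,y\in G$. For $f\in KJ(G;E)$ and $m\ge2$ the limit defining $\varphi_m(x)$ exists in $E$ for every $x\in G$. *)

theory Defs
  imports "HOL-Analysis.Analysis" "HOL-Algebra.Group"
begin

definition KJ :: "('a, 'c) monoid_scheme \<Rightarrow> ('a \<Rightarrow> 'b::real_normed_vector) set" where
  "KJ G = {f. \<exists>c>0. \<forall>x\<in>carrier G. \<forall>y\<in>carrier G.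
      norm (f (x \<otimes>\<^bsub>G\<^esub> y) + f (x \<otimes>\<^bsub>G\<^esub> inv\<^bsub>G\<^esub> y) - 2 *\<^sub>R f x) \<le> c}"

definition phi :: "('a, 'c) monoid_scheme \<Rightarrow> ('a \<Rightarrow> 'b::real_normed_vector) \<Rightarrow> nat \<Rightarrow> 'a \<Rightarrow> 'b" where
  "phi G f m x = lim (\<lambda>k. (1 / real (m ^ k)) *\<^sub>R f (x [^]\<^bsub>G\<^esub> (m ^ k)))"

end

theory Submission
  imports Defs
begin

text \<open>Restricted to the cyclic subgroup generated by \<open>x\<close>, the function \<open>n \<mapsto> f (x\<^sup>n)\<close> has
  bounded Jensen defect on \<open>\<int>\<close> and is therefore quasi-additive. For a quasi-additive sequence
  \<open>g\<close> the quotients \<open>g n / n\<close> form a Cauchy sequence, so they converge to some \<open>L\<close> in the Banach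
  space; every \<open>\<phi>\<^sub>m(x)\<close> is the limit of the subsequence along \<open>n = m\<^sup>k\<close>, hence equals \<open>L\<close>.\<close>

lemma bounded_Jensen_defect_imp_quasi_additive:
  fixes g :: "'a::ab_group_add \<Rightarrow> 'b::real_normed_vector"
  assumes J: "\<And>i j. norm (g (i + j) + g (i - j) - 2 *\<^sub>R g i) \<le> c"
  shows "norm (g (i + j) - g i - g j) \<le> 3/2 * c + norm (g 0)"
proof -
  let ?J = "\<lambda>i j. g (i + j) + g (i - j) - 2 *\<^sub>R g i"
  have "2 *\<^sub>R (g (i + j) + g 0 - g i - g j) = ?J i j + ?J j i - ?J 0 (i - j)"
    by (simp add: algebra_simps scaleR_2)
  also have "norm \<dots> \<le> 3 * c"
    using J[of i j] J[of j i] J[of 0 "i - j"] norm_triangle_ineq norm_triangle_ineq4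
    by (smt (verit, best))
  finally have "norm (g (i + j) + g 0 - g i - g j) \<le> 3/2 * c"
    by simp
  then show ?thesis
    using norm_triangle_ineq4[of "g (i + j) + g 0 - g i - g j" "g 0"]
    by (simp add: algebra_simps)
qed

lemma KJ_int_pow_Jensen_defect_bounded:
  fixes G (structure)
  assumes "group G" and "f \<in> KJ G" and x: "x \<in> carrier G"
  obtains c where "\<And>i j :: int. norm (f (x [^]\<^bsub>G\<^esub> (i + j)) + f (x [^]\<^bsub>G\<^esub> (i - j))
      - 2 *\<^sub>R f (x [^]\<^bsub>G\<^esub> i)) \<le> c"
proof -
  interpret group G by fact
  obtain c where J: "\<forall>a\<in>carrier G. \<forall>b\<in>carrier G.
      norm (f (a \<otimes> b) + f (a \<otimes> inv b) - 2 *\<^sub>R f a) \<le> c"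
    using \<open>f \<in> KJ G\<close> unfolding KJ_def by blast
  show thesis
  proof
    fix i j :: int
    show "norm (f (x [^] (i + j)) + f (x [^] (i - j)) - 2 *\<^sub>R f (x [^] i)) \<le> c"
      using J[rule_format, of "x [^] i" "x [^] j"] x by (simp add: int_pow_mult int_pow_diff)
  qed
qed

lemma quasi_additive_mult:
  fixes g :: "nat \<Rightarrow> 'b::real_normed_vector"
  assumes A: "\<And>u v. norm (g (u + v) - g u - g v) \<le> D"
  shows "norm (g (n * a) - real n *\<^sub>R g a) \<le> real (n + 1) * D"
proof (induction n)
  case 0
  show ?case
    using A[of 0 0] by simp
next
  case (Suc n)
  have "g (Suc n * a) - real (Suc n) *\<^sub>R g a
      = (g (n * a + a) - g (n * a) - g a) + (g (n * a) - real n *\<^sub>R g a)"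
    by (simp add: algebra_simps add.commute)
  also have "norm \<dots> \<le> D + real (n + 1) * D"
    using A[of "n * a" a] Suc.IH norm_triangle_ineq order_trans add_mono by blast
  finally show ?case
    by (simp add: algebra_simps)
qed

lemma quasi_additive_quotient_convergent:
  fixes g :: "nat \<Rightarrow> 'b::banach"
  assumes A: "\<And>u v. norm (g (u + v) - g u - g v) \<le> D"
  shows "convergent (\<lambda>n. (1 / real n) *\<^sub>R g n)"
proof -
  define q where "q n = (1 / real n) *\<^sub>R g n" for n
  have D: "D \<ge> 0"
    using A[of 0 0] norm_ge_zero order_trans by (simp, blast)
  have close: "norm (q a - q b) \<le> 2 * D / real a + 2 * D / real b" if "a \<ge> 1" "b \<ge> 1" for a b
  proof -
    have a: "real a \<ge> 1" and b: "real b \<ge> 1"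
      using that by auto
    have "norm (real b *\<^sub>R g a - real a *\<^sub>R g b)
        \<le> norm (g (a * b) - real a *\<^sub>R g b) + norm (g (b * a) - real b *\<^sub>R g a)"
      using norm_triangle_ineq4[of "g (a * b) - real a *\<^sub>R g b" "g (a * b) - real b *\<^sub>R g a"]
      by (simp add: algebra_simps)
    also have "\<dots> \<le> real (a + 1) * D + real (b + 1) * D"
      by (intro add_mono quasi_additive_mult[OF A])
    also have "\<dots> \<le> 2 * (real a + real b) * D"
      using mult_right_mono[of "real (a + 1)" "2 * real a" D]
        mult_right_mono[of "real (b + 1)" "2 * real b" D] a b D
      by (simp add: algebra_simps)
    finally have bound: "norm (real b *\<^sub>R g a - real a *\<^sub>R g b) \<le> 2 * (real a + real b) * D" .
    have "q a - q b = (1 / (real a * real b)) *\<^sub>R (real b *\<^sub>R g a - real a *\<^sub>R g b)"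
      using a b by (simp add: q_def algebra_simps)
    then have "norm (q a - q b) = norm (real b *\<^sub>R g a - real a *\<^sub>R g b) / (real a * real b)"
      using a b by (simp add: abs_mult)
    also have "\<dots> \<le> 2 * (real a + real b) * D / (real a * real b)"
      using bound a b by (simp add: divide_right_mono)
    also have "\<dots> = 2 * D / real a + 2 * D / real b"
      using a b by (simp add: field_simps)
    finally show ?thesis .
  qed
  have "Cauchy q"
  proof (rule metric_CauchyI)
    fix e :: real
    assume "e > 0"
    have "\<forall>\<^sub>F n in sequentially. 2 * D / real n < e / 2"
      using \<open>e > 0\<close> by (intro order_tendstoD(2)[OF lim_const_over_n]) simp
    then obtain N where N: "\<And>n. n \<ge> N \<Longrightarrow> 2 * D / real n < e / 2"
      unfolding eventually_sequentially by blast
    have "dist (q a) (q b) < e" if "a \<ge> max 1 N" "b \<ge> max 1 N" for a b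
      using close[of a b] N[of a] N[of b] that by (simp add: dist_norm)
    then show "\<exists>M. \<forall>a\<ge>M. \<forall>b\<ge>M. dist (q a) (q b) < e"
      by blast
  qed
  then show ?thesis
    unfolding q_def by (simp add: Cauchy_convergent_iff)
qed

lemma phi_eq_quotient_limit:
  assumes L: "(\<lambda>n. (1 / real n) *\<^sub>R f (x [^]\<^bsub>G\<^esub> n)) \<longlonglongrightarrow> L" and "m \<ge> 2"
  shows "phi G f m x = L"
proof -
  have "strict_mono (\<lambda>k. m ^ k)"
    using \<open>m \<ge> 2\<close> by (intro strict_monoI power_strict_increasing) auto
  from LIMSEQ_subseq_LIMSEQ[OF L this]
  show ?thesis
    unfolding phi_def by (intro limI) (simp add: o_def)
qed

theorem lemma2p6:
  fixes G :: "('a, 'c) monoid_scheme" and f :: "'a \<Rightarrow> 'b::banach" and m :: nat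
  assumes "group G" and "f \<in> KJ G" and "m \<ge> 2"
  shows "\<forall>x\<in>carrier G. phi G f 2 x = phi G f m x"
proof
  fix x
  assume x: "x \<in> carrier G"
  obtain c where "\<And>i j :: int. norm (f (x [^]\<^bsub>G\<^esub> (i + j))
      + f (x [^]\<^bsub>G\<^esub> (i - j)) - 2 *\<^sub>R f (x [^]\<^bsub>G\<^esub> i)) \<le> c"
    using KJ_int_pow_Jensen_defect_bounded[OF assms(1,2) x] by blast
  from bounded_Jensen_defect_imp_quasi_additive[of "\<lambda>i. f (x [^]\<^bsub>G\<^esub> i)", OF this]
  have "norm (f (x [^]\<^bsub>G\<^esub> (u + v)) - f (x [^]\<^bsub>G\<^esub> u) - f (x [^]\<^bsub>G\<^esub> v))
      \<le> 3/2 * c + norm (f \<one>\<^bsub>G\<^esub>)" for u v :: nat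
    by (metis int_pow_0 int_pow_int of_nat_add)
  from quasi_additive_quotient_convergent[of "\<lambda>n. f (x [^]\<^bsub>G\<^esub> n)", OF this]
  obtain L where "(\<lambda>n. (1 / real n) *\<^sub>R f (x [^]\<^bsub>G\<^esub> n)) \<longlonglongrightarrow> L"
    unfolding convergent_def by blast
  with \<open>m \<ge> 2\<close> show "phi G f 2 x = phi G f m x"
    by (simp add: phi_eq_quotient_limit)
qed

end
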